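(* Consider the one-step-ahead prediction problem described in the context, with nonrandomized decisions $\delta=(\delta_0,\delta_1)\in\mathcal D=[0,1]^2$ and the Kullback–Leibler risk $R_\delta(\theta)$. Let $\mathcal C_{<}=\{(\delta_0,\delta_1):0<\delta_0<\delta_1<1\}$, $\mathcal C_{=}=\{(\delta_0,\delta_1):0<\delta_0=\delta_1<1\}$, $\mathcal M=\{(0,1)\}$. Then the class $\mathcal A=\mathcal C_{<}\cup\mathcal C_{=}\cup\mathcal M$ is the minimal complete class within $\mathcal D$. In particular, $\mathcal A$ is exactly the set of admissible decisions in $\mathcal D$.
   Context: Bernoulli model: for $\theta\in[0,1]$, $p_\theta(x)=\theta^x(1-\theta)^{1-x}$, $x\in\{0,1\}$. One observes $x\sim p_\theta$ and predicts an independent future $y\sim p_\theta$. A nonrandomized decision is a pair $\delta=(\delta_0,\delta_1)\in\mathcal D=[0,1]^2$, used as the predictive distribution $p_\delta(y\mid x)=\delta_x^{\,y}(1-\delta_x)^{1-y}$. The loss is the Kullback–Leibler divergence $L(\theta,\delta_x)=\theta\log\frac{\theta}{\delta_x}+(1-\theta)\log\frac{1-\theta}{1-\delta_x}$, with the conventions $0\log(0/q)=0$ for every $q\in[0,1]$, $c\log(c/0)=+\infty$ for $c>0$, and $0\cdot(+\infty)=0$. The risk is $R_\delta(\theta)=(1-\theta)L(\theta,\delta_0)+\theta L(\theta,\delta_1)\in[0,+\infty]$, equivalently $R_\delta(\theta)=-S(\theta)+\theta^2\log\frac1{\delta_1}+\theta(1-\theta)\log\frac1{1-\delta_1}+\theta(1-\theta)\log\frac1{\delta_0}+(1-\theta)^2\log\frac1{1-\delta_0}$,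 where $S(\theta)=-\theta\log\theta-(1-\theta)\log(1-\theta)$ is the binary entropy. A decision $\delta'$ dominates $\delta$ if $R_{\delta'}(\theta)\le R_\delta(\theta)$ for all $\theta\in[0,1]$ with strict inequality for some $\theta$. A decision is admissible if no decision in $\mathcal D$ dominates it. A class $\mathcal C\subseteq\mathcal D$ is complete if every $\delta\in\mathcal D\setminus\mathcal C$ is dominated by some element of $\mathcal C$; it is minimal complete if it is complete and no proper subset of it is complete. *)

theory Defs
  imports "HOL-Analysis.Analysis"
begin

definition xlogxy :: "real \<Rightarrow> real \<Rightarrow> ereal" where
  "xlogxy c q = (if c = 0 then 0 else if q = 0 then \<infinity> else ereal (c * ln (c / q)))"

definition KL_loss :: "real \<Rightarrow> real \<Rightarrow> ereal" where
  "KL_loss \<theta> q = xlogxy \<theta> q + xlogxy (1 - \<theta>) (1 - q)"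

text \<open>Decisions are pairs (delta0, delta1); the ereal product satisfies 0 * infinity = 0.\<close>
definition risk :: "real \<times> real \<Rightarrow> real \<Rightarrow> ereal" where
  "risk \<delta> \<theta> = ereal (1 - \<theta>) * KL_loss \<theta> (fst \<delta>) + ereal \<theta> * KL_loss \<theta> (snd \<delta>)"

definition decisions :: "(real \<times> real) set" where
  "decisions = {0..1} \<times> {0..1}"

definition dominates :: "real \<times> real \<Rightarrow> real \<times> real \<Rightarrow> bool" where
  "dominates \<delta>' \<delta> \<longleftrightarrow>
     (\<forall>\<theta>\<in>{0..1}. risk \<delta>' \<theta> \<le> risk \<delta> \<theta>) \<and> (\<exists>\<theta>\<in>{0..1}. risk \<delta>' \<theta> < risk \<delta> \<theta>)"

definition admissible :: "real \<times> real \<Rightarrow> bool" where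
  "admissible \<delta> \<longleftrightarrow> \<not> (\<exists>\<delta>'\<in>decisions. dominates \<delta>' \<delta>)"

definition complete_class :: "(real \<times> real) set \<Rightarrow> bool" where
  "complete_class C \<longleftrightarrow> C \<subseteq> decisions \<and>
     (\<forall>\<delta>\<in>decisions - C. \<exists>\<delta>'\<in>C. dominates \<delta>' \<delta>)"

definition minimal_complete_class :: "(real \<times> real) set \<Rightarrow> bool" where
  "minimal_complete_class C \<longleftrightarrow> complete_class C \<and> (\<forall>C'. C' \<subset> C \<longrightarrow> \<not> complete_class C')"

definition A_class :: "(real \<times> real) set" where
  "A_class = {(d0, d1). 0 < d0 \<and> d0 < d1 \<and> d1 < 1}
           \<union> {(d0, d1). 0 < d0 \<and> d0 = d1 \<and> d1 < 1}
           \<union> {(0, 1)}"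

end

theory Submission
  imports Defs
begin

(* The class A is shown to be (i) complete and (ii) made of admissible decisions.  A general
   argument about dominance (section on complete classes) shows that any complete class of
   admissible decisions is the unique minimal complete class and equals the admissible set.

   (i) Completeness.  A decision with a coordinate in {0,1} has infinite risk on (0,1), while
   (0,1) has zero risk at both vertices theta = 0, 1; hence (0,1) dominates it.  An interior
   decision with delta1 < delta0 is strictly dominated everywhere by the constant decision
   (t,t), t = delta0 / (1 + delta0 - delta1): the risk gap equals
   theta^2 ln(d0/d1) + (1-theta)^2 ln((1-d1)/(1-d0)) - ln(1 + d0 - d1), which is positive by
   the bound ln x - ln y >= 2(x-y)/(x+y) and ln(1+d) < d.
   (ii) Admissibility.  (0,1) is the only decision with zero risk at both vertices.  An interior
   decision (c,d1) with c <= d1 is the unique minimiser of R(c) + beta R(1) for a suitable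
   beta >= 0 (a Bayes rule), by the Gibbs inequality; so nothing can dominate it. *)

section \<open>Elementary inequalities for the logarithm\<close>

text \<open>A lower bound for the logarithm, sharper than the tangent bound near 1.\<close>
lemma ln_ge_two_ratio:
  fixes x :: real
  assumes "1 \<le> x"
  shows "2 * (x - 1) / (x + 1) \<le> ln x"
proof -
  let ?g = "\<lambda>x::real. ln x - 2 * (x - 1) / (x + 1)"
  have "?g 1 \<le> ?g x"
  proof (rule DERIV_nonneg_imp_nondecreasing[OF assms])
    fix y :: real
    assume y: "1 \<le> y" "y \<le> x"
    have deriv: "DERIV ?g y :> (1 / y - 4 / (y + 1)^2)"
      using y by (auto intro!: derivative_eq_intros simp: field_simps power2_eq_square)
    have "4 * y \<le> (y + 1)^2"
      using sum_squares_ge_zero[of "y - 1" 0] by (simp add: power2_eq_square algebra_simps)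
    then have "4 / (y + 1)^2 \<le> 1 / y"
      using y by (simp add: field_simps)
    with deriv show "\<exists>z. DERIV ?g y :> z \<and> z \<ge> 0"
      by (intro exI[of _ "1 / y - 4 / (y + 1)^2"]) simp
  qed
  then show ?thesis by simp
qed

lemma ln_diff_ge_two_ratio:
  fixes x y :: real
  assumes "0 < y" "y \<le> x"
  shows "2 * (x - y) / (x + y) \<le> ln x - ln y"
proof -
  have "2 * (x / y - 1) / (x / y + 1) \<le> ln (x / y)"
    using assms by (intro ln_ge_two_ratio) simp
  moreover have "x / y - 1 = (x - y) / y" "x / y + 1 = (x + y) / y"
    using assms by (simp_all add: field_simps)
  then have "2 * (x / y - 1) / (x / y + 1) = 2 * (x - y) / (x + y)"
    using assms by simp
  ultimately show ?thesis
    using assms by (simp add: ln_div)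
qed

lemma gibbs_two_point:
  fixes a b p q :: real
  assumes "0 < a" "0 < b" "0 < p" "p < 1" "0 < q" "q < 1" and ratio: "a * (1 - p) = b * p"
  shows "a * ln q + b * ln (1 - q) \<le> a * ln p + b * ln (1 - p)"
    and "a * ln q + b * ln (1 - q) = a * ln p + b * ln (1 - p) \<Longrightarrow> q = p"
proof -
  have tangent0: "ln (q / p) \<le> q / p - 1"
    and tangent1: "ln ((1 - q) / (1 - p)) \<le> (1 - q) / (1 - p) - 1"
    using assms by (intro ln_le_minus_one; simp)+
  have ln_quot: "ln (q / p) = ln q - ln p" "ln ((1 - q) / (1 - p)) = ln (1 - q) - ln (1 - p)"
    using assms by (simp_all add: ln_div)
  text \<open>The linearised gain vanishes exactly because of the ratio condition.\<close>
  have linear_zero: "a * (q / p - 1) + b * ((1 - q) / (1 - p) - 1) = 0"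
  proof -
    have "a / p = b / (1 - p)" using assms by (simp add: field_simps)
    moreover have "a * (q / p - 1) = (q - p) * (a / p)"
      and "b * ((1 - q) / (1 - p) - 1) = - ((q - p) * (b / (1 - p)))"
      using assms by (simp_all add: field_simps)
    ultimately show ?thesis by (simp add: algebra_simps)
  qed
  have "a * ln (q / p) + b * ln ((1 - q) / (1 - p))
          \<le> a * (q / p - 1) + b * ((1 - q) / (1 - p) - 1)"
    using tangent0 tangent1 assms by (intro add_mono mult_left_mono) auto
  then show "a * ln q + b * ln (1 - q) \<le> a * ln p + b * ln (1 - p)"
    using linear_zero ln_quot by (simp add: algebra_simps)
  assume eq: "a * ln q + b * ln (1 - q) = a * ln p + b * ln (1 - p)"
  show "q = p"
  proof (rule ccontr)
    assume "q \<noteq> p"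
    then have "ln (q / p) < q / p - 1"
      using tangent0 ln_eq_minus_one[of "q / p"] assms by force
    then have "a * ln (q / p) + b * ln ((1 - q) / (1 - p))
                 < a * (q / p - 1) + b * ((1 - q) / (1 - p) - 1)"
      using tangent1 assms by (intro add_less_le_mono mult_strict_left_mono mult_left_mono) auto
    then show False
      using linear_zero ln_quot eq by (simp add: algebra_simps)
  qed
qed

text \<open>The inequality behind the domination of decisions with delta1 < delta0: shrinking both
  predictions to a common value gains ln(1 + d0 - d1), which is less than the loss incurred
  by the spread, uniformly in theta.\<close>
lemma shrinkage_gain_lt_spread_cost:
  fixes d0 d1 \<theta> :: real
  assumes "0 < d1" "d1 < d0" "d0 < 1" "0 \<le> \<theta>" "\<theta> \<le> 1"
  shows "ln (1 + (d0 - d1)) < \<theta>^2 * (ln d0 - ln d1) + (1 - \<theta>)^2 * (ln (1 - d1) - ln (1 - d0))"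
proof -
  define d where "d = d0 - d1"
  define p where "p = d0 + d1"
  have "0 < d" "0 < p" "p < 2" using assms by (auto simp: d_def p_def)
  have bound0: "2 * d / p \<le> ln d0 - ln d1"
    using ln_diff_ge_two_ratio[of d1 d0] assms by (simp add: d_def p_def)
  have bound1: "2 * d / (2 - p) \<le> ln (1 - d1) - ln (1 - d0)"
    using ln_diff_ge_two_ratio[of "1 - d0" "1 - d1"] assms
    by (simp add: d_def p_def algebra_simps)
  text \<open>The quadratic in theta on the left exceeds d by a perfect square.\<close>
  have "\<theta>^2 * (2 * d / p) + (1 - \<theta>)^2 * (2 * d / (2 - p)) - d = d * (2 * \<theta> - p)^2 / (p * (2 - p))"
    using \<open>0 < p\<close> \<open>p < 2\<close> by (simp add: field_simps power2_eq_square)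
  also have "\<dots> \<ge> 0" using \<open>0 < d\<close> \<open>0 < p\<close> \<open>p < 2\<close> by simp
  finally have "d \<le> \<theta>^2 * (2 * d / p) + (1 - \<theta>)^2 * (2 * d / (2 - p))" by simp
  also have "\<dots> \<le> \<theta>^2 * (ln d0 - ln d1) + (1 - \<theta>)^2 * (ln (1 - d1) - ln (1 - d0))"
    by (intro add_mono mult_left_mono bound0 bound1) auto
  finally show ?thesis
    using ln_add_one_self_less_self[OF \<open>0 < d\<close>] by (simp add: d_def)
qed

section \<open>The risk function\<close>

text \<open>Real-valued versions of the loss and the risk, valid when the predictions are interior.\<close>
definition kl_real :: "real \<Rightarrow> real \<Rightarrow> real" where
  "kl_real \<theta> q = \<theta> * (ln \<theta> - ln q) + (1 - \<theta>) * (ln (1 - \<theta>) - ln (1 - q))"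

definition risk_real :: "real \<times> real \<Rightarrow> real \<Rightarrow> real" where
  "risk_real \<delta> \<theta> = (1 - \<theta>) * kl_real \<theta> (fst \<delta>) + \<theta> * kl_real \<theta> (snd \<delta>)"

lemma KL_loss_interior:
  assumes "0 \<le> \<theta>" "\<theta> \<le> 1" "0 < q" "q < 1"
  shows "KL_loss \<theta> q = ereal (kl_real \<theta> q)"
  using assms by (simp add: KL_loss_def kl_real_def xlogxy_def ln_div)

lemma risk_interior:
  assumes "0 < fst \<delta>" "fst \<delta> < 1" "0 < snd \<delta>" "snd \<delta> < 1" "0 \<le> \<theta>" "\<theta> \<le> 1"
  shows "risk \<delta> \<theta> = ereal (risk_real \<delta> \<theta>)"
  using assms by (simp add: risk_def risk_real_def KL_loss_interior)

lemma risk_boundary_infinite: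
  assumes "0 < \<theta>" "\<theta> < 1" "fst \<delta> \<in> {0, 1} \<or> snd \<delta> \<in> {0, 1}"
  shows "risk \<delta> \<theta> = \<infinity>"
proof -
  have KL_not_minf: "KL_loss \<theta> q \<noteq> -\<infinity>" for q
    by (simp add: KL_loss_def xlogxy_def)
  have KL_boundary: "q \<in> {0, 1} \<Longrightarrow> KL_loss \<theta> q = \<infinity>" for q
    using assms(1,2) by (auto simp: KL_loss_def xlogxy_def)
  have "ereal w * KL_loss \<theta> q \<noteq> -\<infinity>" if "0 < w" for w q
    using KL_not_minf[of q] that by (cases "KL_loss \<theta> q") auto
  moreover have "ereal (1 - \<theta>) * KL_loss \<theta> (fst \<delta>) = \<infinity> \<or> ereal \<theta> * KL_loss \<theta> (snd \<delta>) = \<infinity>"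
    using assms KL_boundary by auto
  ultimately show ?thesis
    using assms(1,2) unfolding risk_def by (metis diff_gt_0_iff_gt ereal_plus_eq_PInfty)
qed

lemma risk_at_vertices:
  "risk \<delta> 0 = (if fst \<delta> = 1 then \<infinity> else ereal (- ln (1 - fst \<delta>)))"
  "risk \<delta> 1 = (if snd \<delta> = 0 then \<infinity> else ereal (- ln (snd \<delta>)))"
  by (simp_all add: risk_def KL_loss_def xlogxy_def zero_ereal_def[symmetric] ln_div)

lemma risk_vertex_nonneg:
  assumes "\<delta> \<in> decisions" "\<theta> \<in> {0, 1}"
  shows "0 \<le> risk \<delta> \<theta>"
  using assms by (auto simp: risk_at_vertices decisions_def)

lemma risk_perfect_at_vertices: "risk (0, 1) 0 = 0" "risk (0, 1) 1 = 0"
  by (simp_all add: risk_at_vertices)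

lemma risk_vertex_pos:
  assumes "\<delta> \<in> decisions" "\<delta> \<noteq> (0, 1)"
  shows "\<exists>\<theta>\<in>{0, 1}. 0 < risk \<delta> \<theta>"
proof (cases "fst \<delta> = 0")
  case True
  then have "snd \<delta> < 1" using assms by (cases \<delta>) (auto simp: decisions_def)
  then have "0 < risk \<delta> 1" using assms by (auto simp: risk_at_vertices decisions_def)
  then show ?thesis by blast
next
  case False
  then have "0 < fst \<delta>" using assms by (auto simp: decisions_def)
  then have "0 < risk \<delta> 0" using assms by (auto simp: risk_at_vertices decisions_def)
  then show ?thesis by blast
qed

section \<open>Domination of decisions outside A\<close>

lemma boundary_dominated:
  assumes "\<delta> \<in> decisions" "\<delta> \<noteq> (0, 1)" "fst \<delta> \<in> {0, 1} \<or> snd \<delta> \<in> {0, 1}"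
  shows "dominates (0, 1) \<delta>"
proof -
  have "risk (0, 1) \<theta> \<le> risk \<delta> \<theta>" if "\<theta> \<in> {0..1}" for \<theta>
  proof (cases "\<theta> \<in> {0, 1}")
    case True
    then show ?thesis
      using risk_vertex_nonneg[OF assms(1)] risk_perfect_at_vertices by auto
  next
    case False
    then show ?thesis using that risk_boundary_infinite[OF _ _ assms(3)] by auto
  qed
  moreover obtain \<theta> where "\<theta> \<in> {0, 1}" "0 < risk \<delta> \<theta>"
    using risk_vertex_pos[OF assms(1,2)] by blast
  then have "\<exists>\<theta>\<in>{0..1}. risk (0, 1) \<theta> < risk \<delta> \<theta>"
    using risk_perfect_at_vertices by (intro bexI[of _ \<theta>]) auto
  ultimately show ?thesis by (simp add: dominates_def)
qed

lemma inverted_dominated_by_constant: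
  assumes "0 < d1" "d1 < d0" "d0 < 1"
  defines "t \<equiv> d0 / (1 + (d0 - d1))"
  shows "0 < t" "t < 1" "dominates (t, t) (d0, d1)"
proof -
  define s where "s = 1 + (d0 - d1)"
  have "1 < s" using assms by (simp add: s_def)
  have t_eq: "t = d0 / s" by (simp add: t_def s_def)
  have "1 - t = (s - d0) / s" using \<open>1 < s\<close> by (simp add: t_eq field_simps)
  then have one_minus_t: "1 - t = (1 - d1) / s" by (simp add: s_def)
  show "0 < t" "t < 1"
    using assms(1-3) \<open>1 < s\<close> t_eq one_minus_t by simp_all
  have ln_t: "ln t = ln d0 - ln s"
    using assms(1-3) \<open>1 < s\<close> by (simp add: t_eq ln_div)
  have ln_one_minus_t: "ln (1 - t) = ln (1 - d1) - ln s"
    unfolding one_minus_t using assms(1-3) \<open>1 < s\<close> by (simp add: ln_div)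
  have "risk_real (t, t) \<theta> < risk_real (d0, d1) \<theta>" if "0 \<le> \<theta>" "\<theta> \<le> 1" for \<theta>
  proof -
    have "risk_real (d0, d1) \<theta> - risk_real (t, t) \<theta>
        = \<theta>^2 * (ln d0 - ln d1) + (1 - \<theta>)^2 * (ln (1 - d1) - ln (1 - d0)) - ln s"
      unfolding risk_real_def kl_real_def fst_conv snd_conv ln_t ln_one_minus_t
      by (simp add: algebra_simps power2_eq_square)
    then show ?thesis
      using shrinkage_gain_lt_spread_cost[of d1 d0 \<theta>] assms(1-3) that by (simp add: s_def)
  qed
  then have "risk (t, t) \<theta> < risk (d0, d1) \<theta>" if "\<theta> \<in> {0..1}" for \<theta>
    using that assms(1-3) \<open>0 < t\<close> \<open>t < 1\<close> by (simp add: risk_interior)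
  then show "dominates (t, t) (d0, d1)"
    unfolding dominates_def by (auto intro: less_imp_le)
qed

section \<open>Admissibility of the decisions in A\<close>

text \<open>(0,1) is admissible: a dominating decision would need zero risk at both vertices.\<close>
lemma admissible_perfect: "admissible (0, 1)"
  unfolding admissible_def
proof
  assume "\<exists>\<delta>\<in>decisions. dominates \<delta> (0, 1)"
  then obtain \<delta> where dec: "\<delta> \<in> decisions" and dom: "dominates \<delta> (0, 1)" by blast
  then have "\<delta> \<noteq> (0, 1)" by (auto simp: dominates_def)
  then obtain \<theta> where \<theta>: "\<theta> \<in> {0, 1}" and "0 < risk \<delta> \<theta>"
    using risk_vertex_pos[OF dec] by blast
  moreover have "risk \<delta> \<theta> \<le> risk (0, 1) \<theta>"
    using dom \<theta> by (auto simp: dominates_def)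
  ultimately show False
    using \<theta> risk_perfect_at_vertices by auto
qed

text \<open>Bayes property: for 0 < c \<le> d1 < 1 the decision (c,d1) is the unique interior minimiser
  of R(c) + beta R(1), where beta = c (d1 - c) / (1 - d1) \<ge> 0.\<close>
lemma bayes_unique_minimiser:
  assumes "0 < c" "c \<le> d1" "d1 < 1" "0 < x" "x < 1" "0 < y" "y < 1"
  defines "\<beta> \<equiv> c * (d1 - c) / (1 - d1)"
  assumes le: "risk_real (x, y) c + \<beta> * risk_real (x, y) 1 \<le> risk_real (c, d1) c + \<beta> * risk_real (c, d1) 1"
  shows "(x, y) = (c, d1)"
proof -
  have "c < 1" "0 \<le> \<beta>" using assms(1-3) by (simp_all add: \<beta>_def)
  text \<open>Up to a constant, the weighted risk is minus a sum of two Gibbs objectives.\<close>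
  define G0 where "G0 u = c * ln u + (1 - c) * ln (1 - u)" for u
  define G1 where "G1 v = (c^2 + \<beta>) * ln v + c * (1 - c) * ln (1 - v)" for v
  have weighted: "risk_real (u, v) c + \<beta> * risk_real (u, v) 1
                   = (c * ln c + (1 - c) * ln (1 - c)) - ((1 - c) * G0 u + G1 v)" for u v
    by (simp add: risk_real_def kl_real_def G0_def G1_def algebra_simps power2_eq_square)
  have G0_max: "G0 x \<le> G0 c" "G0 x = G0 c \<Longrightarrow> x = c"
    using gibbs_two_point[of c "1 - c" c x] assms(1,4,5) \<open>c < 1\<close> by (auto simp: G0_def)
  have "(c^2 + \<beta>) * (1 - d1) = c * (1 - c) * d1"
    using assms(1-3) by (simp add: \<beta>_def field_simps power2_eq_square)
  moreover have "0 < c^2 + \<beta>" "0 < c * (1 - c)"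
    using \<open>0 \<le> \<beta>\<close> \<open>0 < c\<close> \<open>c < 1\<close> by (simp_all add: add_pos_nonneg)
  ultimately have G1_max: "G1 y \<le> G1 d1" "G1 y = G1 d1 \<Longrightarrow> y = d1"
    using gibbs_two_point[of "c^2 + \<beta>" "c * (1 - c)" d1 y] assms by (auto simp: G1_def)
  have "(1 - c) * G0 c + G1 d1 \<le> (1 - c) * G0 x + G1 y"
    using le weighted[of x y] weighted[of c d1] by simp
  moreover have "(1 - c) * G0 x \<le> (1 - c) * G0 c"
    using G0_max(1) \<open>c < 1\<close> by (intro mult_left_mono) auto
  ultimately have "(1 - c) * G0 x = (1 - c) * G0 c" "G1 y = G1 d1"
    using G1_max(1) by linarith+
  then have "G0 x = G0 c" "G1 y = G1 d1" using \<open>c < 1\<close> by simp_all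
  then show ?thesis using G0_max(2) G1_max(2) by simp
qed

text \<open>Interior decisions with delta0 \<le> delta1 are admissible: a dominating decision has finite
  risk at theta = c, hence is interior, and then contradicts the Bayes property.\<close>
lemma admissible_interior:
  assumes "0 < c" "c \<le> d1" "d1 < 1"
  shows "admissible (c, d1)"
  unfolding admissible_def
proof
  assume "\<exists>\<delta>\<in>decisions. dominates \<delta> (c, d1)"
  then obtain x y where dec: "(x, y) \<in> decisions" and dom: "dominates (x, y) (c, d1)" by auto
  have le: "risk (x, y) \<theta> \<le> risk (c, d1) \<theta>" if "\<theta> \<in> {0..1}" for \<theta>
    using dom that by (simp add: dominates_def)
  have "c < 1" using assms by simp
  have own_risk: "risk (c, d1) \<theta> = ereal (risk_real (c, d1) \<theta>)" if "\<theta> \<in> {0..1}" for \<theta>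
    using assms \<open>c < 1\<close> that by (simp add: risk_interior)
  have "risk (x, y) c \<noteq> \<infinity>"
    using le[of c] own_risk[of c] assms \<open>c < 1\<close> by auto
  then have "x \<notin> {0, 1} \<and> y \<notin> {0, 1}"
    using risk_boundary_infinite[of c "(x, y)"] assms \<open>c < 1\<close> by auto
  then have "0 < x" "x < 1" "0 < y" "y < 1"
    using dec by (auto simp: decisions_def)
  then have "risk_real (x, y) \<theta> \<le> risk_real (c, d1) \<theta>" if "\<theta> \<in> {0..1}" for \<theta>
    using le[OF that] own_risk[OF that] that by (simp add: risk_interior)
  then have "risk_real (x, y) c + (c * (d1 - c) / (1 - d1)) * risk_real (x, y) 1
           \<le> risk_real (c, d1) c + (c * (d1 - c) / (1 - d1)) * risk_real (c, d1) 1"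
    using assms \<open>c < 1\<close> by (intro add_mono mult_left_mono) auto
  then have "(x, y) = (c, d1)"
    using bayes_unique_minimiser \<open>0 < x\<close> \<open>x < 1\<close> \<open>0 < y\<close> \<open>y < 1\<close> assms by blast
  then show False using dom by (simp add: dominates_def)
qed

section \<open>Complete classes\<close>

lemma complete_class_contains_admissible:
  assumes "complete_class C" "\<delta> \<in> decisions" "admissible \<delta>"
  shows "\<delta> \<in> C"
  using assms unfolding complete_class_def admissible_def by blast

lemma admissible_complete_class_is_minimal:
  assumes complete: "complete_class C" and adm: "\<forall>\<delta>\<in>C. admissible \<delta>"
  shows "minimal_complete_class C"
    and "\<forall>C'. minimal_complete_class C' \<longrightarrow> C' = C"
    and "C = {\<delta>\<in>decisions. admissible \<delta>}"
proof -
  have decs: "C \<subseteq> decisions" using complete by (simp add: complete_class_def)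
  have contains: "C \<subseteq> C'" if "complete_class C'" for C'
    using complete_class_contains_admissible[OF that] adm decs by blast
  show "minimal_complete_class C"
    unfolding minimal_complete_class_def using complete contains by blast
  show "\<forall>C'. minimal_complete_class C' \<longrightarrow> C' = C"
    using contains complete unfolding minimal_complete_class_def by blast
  show "C = {\<delta>\<in>decisions. admissible \<delta>}"
    using adm decs complete_class_contains_admissible[OF complete] by blast
qed

lemma A_class_admissible: "\<forall>\<delta>\<in>A_class. admissible \<delta>"
  unfolding A_class_def using admissible_perfect admissible_interior by (auto simp: less_imp_le)

lemma A_class_complete: "complete_class A_class"
  unfolding complete_class_def
proof (intro conjI ballI)
  show "A_class \<subseteq> decisions" by (auto simp: A_class_def decisions_def)
  fix \<delta> assume \<delta>: "\<delta> \<in> decisions - A_class"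
  obtain d0 d1 where \<delta>_eq: "\<delta> = (d0, d1)" by (cases \<delta>)
  have perfect_in_A: "(0, 1) \<in> A_class" by (simp add: A_class_def)
  show "\<exists>\<delta>'\<in>A_class. dominates \<delta>' \<delta>"
  proof (cases "d0 \<in> {0, 1} \<or> d1 \<in> {0, 1}")
    case True
    then show ?thesis
      using boundary_dominated[of \<delta>] \<delta> \<delta>_eq perfect_in_A by fastforce
  next
    case False
    then have "0 < d1" "d1 < d0" "d0 < 1"
      using \<delta> \<delta>_eq by (auto simp: decisions_def A_class_def)
    from inverted_dominated_by_constant[OF this] show ?thesis
      using \<delta>_eq by (auto simp: A_class_def)
  qed
qed

theorem theorem1:
  shows "minimal_complete_class A_class
         \<and> (\<forall>C. minimal_complete_class C \<longrightarrow> C = A_class)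
         \<and> A_class = {\<delta>\<in>decisions. admissible \<delta>}"
  using admissible_complete_class_is_minimal[OF A_class_complete A_class_admissible] by blast

end
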